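(* Let $m\ge 2$ and $k\ge 0$ be integers. The inner multiplicity $\gamma_{\lambda_k}(\vec 0)$ of the zero weight in the irrep $\lambda_k$ of $\mathrm{SU}(m)$ (i.e. the dimension of its zero-weight space, equivalently the number of semistandard Young tableaux of shape $(2k,k,\dots,k,0)$ with entries in $\{1,\dots,m\}$ in which every entry $1,\dots,m$ occurs equally often) is $$\gamma_{\lambda_k}(\vec 0)=\binom{k+m-2}{k}.$$
   Context: For $k\in\mathbb N$, $\lambda_k$ denotes the irreducible representation of $\mathrm{SU}(m)$ with Young diagram $(2k,k,\dots,k,0)$, i.e. first row of $2k$ boxes, rows $2,\dots,m-1$ of $k$ boxes each, and empty $m$-th row. Weights are taken with respect to the diagonal maximal torus of $\mathrm{SU}(m)$; the inner multiplicity of a weight is the dimension of the corresponding weight space. *)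

theory Defs
  imports Main
begin

definition lam_shape :: "nat \<Rightarrow> nat \<Rightarrow> nat \<Rightarrow> nat" where
  "lam_shape m k i = (if i = 0 then 2*k else if i < m - 1 then k else 0)"

definition cells :: "nat \<Rightarrow> (nat \<Rightarrow> nat) \<Rightarrow> (nat \<times> nat) set" where
  "cells m sh = {(i,j). i < m \<and> j < sh i}"

definition ssyt :: "nat \<Rightarrow> (nat \<Rightarrow> nat) \<Rightarrow> (nat \<times> nat \<Rightarrow> nat) \<Rightarrow> bool" where
  "ssyt m sh T \<longleftrightarrow>
     (\<forall>c \<in> cells m sh. T c \<in> {1..m}) \<and>
     (\<forall>c. c \<notin> cells m sh \<longrightarrow> T c = 0) \<and>
     (\<forall>i j. (i, Suc j) \<in> cells m sh \<longrightarrow> T (i,j) \<le> T (i, Suc j)) \<and>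
     (\<forall>i j. (Suc i, j) \<in> cells m sh \<longrightarrow> T (i,j) < T (Suc i, j))"

definition content :: "nat \<Rightarrow> (nat \<Rightarrow> nat) \<Rightarrow> (nat \<times> nat \<Rightarrow> nat) \<Rightarrow> nat \<Rightarrow> nat" where
  "content m sh T a = card {c \<in> cells m sh. T c = a}"

definition zero_weight_mult :: "nat \<Rightarrow> nat \<Rightarrow> nat" where
  "zero_weight_mult m k = card {T. ssyt m (lam_shape m k) T \<and>
      (\<forall>a \<in> {1..m}. \<forall>b \<in> {1..m}. content m (lam_shape m k) T a = content m (lam_shape m k) T b)}"

end

theory Submission
  imports Defs "HOL-Library.Multiset"
begin

text \<open>
  In a semistandard tableau of shape \<open>\<lambda>\<^sub>k\<close>, each of the \<open>k\<close> columns of height \<open>m - 1\<close> is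
  strictly increasing in \<open>{1..m}\<close>, hence equals \<open>{1..m}\<close> with a single value \<open>x\<^sub>j\<close> removed, and
  the row condition says \<open>x\<^sub>1 \<ge> \<dots> \<ge> x\<^sub>k\<close>. The entry \<open>a\<close> then occurs \<open>k - #{j. x\<^sub>j = a}\<close>
  times in these columns and \<open>#{j. y\<^sub>j = a}\<close> times in the weakly increasing arm
  \<open>y\<^sub>1 \<le> \<dots> \<le> y\<^sub>k\<close> of the first row. Summing over \<open>a\<close> shows that all contents agree iff the
  multisets of the \<open>x\<^sub>j\<close> and the \<open>y\<^sub>j\<close> coincide; being sorted in opposite directions, this means
  \<open>y = rev x\<close>, and the row condition at the corner \<open>x\<^sub>k\<close>, \<open>y\<^sub>1\<close> forces \<open>x\<^sub>k \<ge> 2\<close>. So zero-weight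
  tableaux correspond to multisets of size \<open>k\<close> drawn from \<open>{2..m}\<close>.
\<close>

text \<open>The \<open>(i + 1)\<close>-st smallest positive integer different from \<open>x\<close>.\<close>

definition omit_col :: "nat \<Rightarrow> nat \<Rightarrow> nat" where
  "omit_col x i = (if Suc i < x then Suc i else Suc (Suc i))"

lemma omit_col_strict_mono: "omit_col x i < omit_col x (Suc i)"
  by (simp add: omit_col_def)

lemma omit_col_zero_le_iff: "omit_col x 0 \<le> x \<longleftrightarrow> 2 \<le> x"
  by (simp add: omit_col_def)

lemma omit_col_in_range: "i < n \<Longrightarrow> omit_col x i \<in> {1..Suc n}"
  by (simp add: omit_col_def)

lemma omit_col_fiber:
  assumes "x \<in> {1..Suc n}" "a \<in> {1..Suc n}"
  shows "{i. i < n \<and> omit_col x i = a} = (if a = x then {} else {if a < x then a - 1 else a - 2})"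
  using assms by (auto simp: omit_col_def)

lemma omit_col_pointwise_le_iff:
  assumes "x \<in> {1..Suc n}" "y \<in> {1..Suc n}"
  shows "(\<forall>i<n. omit_col x i \<le> omit_col y i) \<longleftrightarrow> y \<le> x"
proof
  assume "\<forall>i<n. omit_col x i \<le> omit_col y i"
  then show "y \<le> x"
    using assms by (cases "x < y") (auto simp: omit_col_def dest!: spec[of _ "x - 1"])
qed (auto simp: omit_col_def)

lemma strict_mono_column_bounds:
  assumes range: "\<forall>i<n. f i \<in> {1..Suc n}" and inc: "\<forall>i. Suc i < n \<longrightarrow> f i < f (Suc i)"
    and "i < n"
  shows "Suc i \<le> f i \<and> f i \<le> Suc (Suc i)"
proof
  show "Suc i \<le> f i"
    using \<open>i < n\<close> by (induction i) (use range inc in \<open>auto simp: Suc_le_eq\<close>)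
  have "f i + (n - 1 - i) \<le> f (n - 1)"
  proof -
    have "i \<le> n - 1"
      using \<open>i < n\<close> by simp
    then show ?thesis
    proof (induction i rule: inc_induct)
      case (step j)
      then show ?case
        using inc[rule_format, of j] by linarith
    qed simp
  qed
  moreover have "f (n - 1) \<le> Suc n"
    using range \<open>i < n\<close> by simp
  ultimately show "f i \<le> Suc (Suc i)"
    using \<open>i < n\<close> by linarith
qed

lemma strict_mono_column_eq_omit_col:
  assumes range: "\<forall>i<n. f i \<in> {1..Suc n}" and inc: "\<forall>i. Suc i < n \<longrightarrow> f i < f (Suc i)"
  shows "\<exists>x\<in>{1..Suc n}. \<forall>i<n. f i = omit_col x i"
proof -
  note bounds = strict_mono_column_bounds[OF range inc]
  define i0 where "i0 = (LEAST i. i = n \<or> f i = Suc (Suc i))"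
  have i0_le: "i0 \<le> n"
    unfolding i0_def by (rule Least_le) simp
  have i0_jump: "i0 = n \<or> f i0 = Suc (Suc i0)"
    unfolding i0_def by (rule LeastI[of _ n]) simp
  have below: "f i = Suc i" if "i < i0" for i
    using not_less_Least[OF that[unfolded i0_def]] bounds[of i] that i0_le by fastforce
  have above: "f i = Suc (Suc i)" if "i0 \<le> i" "i < n" for i
    using that
  proof (induction i rule: dec_induct)
    case base then show ?case using i0_jump by auto
  next
    case (step i) then show ?case using inc bounds[of "Suc i"] by fastforce
  qed
  have "\<forall>i<n. f i = omit_col (Suc i0) i"
    using below above by (auto simp: omit_col_def not_less)
  then show ?thesis
    using i0_le by auto
qed

lemma cells_lam_shape:
  "2 \<le> m \<Longrightarrow> cells m (lam_shape m k) = {..<m - 1} \<times> {..<k} \<union> {0} \<times> {k..<2 * k}"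
  by (auto simp: cells_def lam_shape_def split: if_splits)

text \<open>
  Column \<open>j < length xs\<close> of the block of height \<open>m - 1\<close> is \<open>{1..m}\<close> without \<open>xs ! j\<close>; the
  first row (row \<open>0\<close>) continues with the arm \<open>ys\<close>.
\<close>

definition lam_tableau :: "nat \<Rightarrow> nat list \<Rightarrow> nat list \<Rightarrow> nat \<times> nat \<Rightarrow> nat" where
  "lam_tableau m xs ys = (\<lambda>(i, j).
     if i < m - 1 \<and> j < length xs then omit_col (xs ! j) i
     else if i = 0 \<and> length xs \<le> j \<and> j < length xs + length ys then ys ! (j - length xs)
     else 0)"

lemma count_list_eq_card_nth: "count_list xs a = card {j. j < length xs \<and> xs ! j = a}"
  by (simp add: count_list_eq_length_filter length_filter_conv_card eq_commute)

lemma card_nth_neq_add_count_list: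
  "card {j. j < length xs \<and> xs ! j \<noteq> a} + count_list xs a = length xs"
  using sum_length_filter_compl[of "(=) a" xs]
  by (simp add: count_list_eq_length_filter length_filter_conv_card eq_commute)

lemma content_lam_tableau:
  assumes m: "2 \<le> m" and len: "length xs = k" "length ys = k"
    and xs: "set xs \<subseteq> {1..m}" and a: "a \<in> {1..m}"
  shows "content m (lam_shape m k) (lam_tableau m xs ys) a + count_list xs a = k + count_list ys a"
proof -
  let ?T = "lam_tableau m xs ys"
  define block where "block = {c \<in> {..<m - 1} \<times> {..<k}. ?T c = a}"
  define arm where "arm = {c \<in> {0} \<times> {k..<2 * k}. ?T c = a}"
  have fiber: "card {i. i < m - 1 \<and> omit_col (xs ! j) i = a} = (if xs ! j = a then 0 else 1)"
    if "j < k" for j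
  proof -
    have "xs ! j \<in> {1..m}"
      using nth_mem[of j xs] xs that len by blast
    then have "xs ! j \<in> {1..Suc (m - 1)}" "a \<in> {1..Suc (m - 1)}"
      using a m by auto
    then show ?thesis
      by (simp add: omit_col_fiber)
  qed
  have "block = prod.swap ` (SIGMA j:{..<k}. {i. i < m - 1 \<and> omit_col (xs ! j) i = a})"
    using len by (auto simp: block_def lam_tableau_def)
  then have "card block = (\<Sum>j<k. card {i. i < m - 1 \<and> omit_col (xs ! j) i = a})"
    by (simp add: card_image)
  also have "\<dots> = (\<Sum>j<k. if xs ! j = a then 0 else 1)"
    by (intro sum.cong refl fiber) simp
  also have "\<dots> = card {j. j < k \<and> xs ! j \<noteq> a}"
    by (simp add: sum.If_cases Int_def Compl_eq)
  finally have "card block + count_list xs a = k"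
    using card_nth_neq_add_count_list[of xs a] len by simp
  moreover have "arm = (\<lambda>j. (0, k + j)) ` {j. j < k \<and> ys ! j = a}"
    using len by (auto simp: arm_def lam_tableau_def image_iff) (metis le_add_diff_inverse less_diff_conv2 mult_2)
  then have "card arm = count_list ys a"
    using len by (simp add: card_image inj_on_def count_list_eq_card_nth)
  moreover have "{c \<in> cells m (lam_shape m k). ?T c = a} = block \<union> arm" "block \<inter> arm = {}"
    using m by (auto simp: cells_lam_shape block_def arm_def)
  ultimately show ?thesis
    unfolding content_def by (simp add: card_Un_disjoint block_def arm_def)
qed

lemma ssyt_lam_shape_obtains_lam_tableau:
  assumes m: "2 \<le> m" and T: "ssyt m (lam_shape m k) T"
  obtains xs ys where "length xs = k" "length ys = k" "set xs \<subseteq> {1..m}" "T = lam_tableau m xs ys"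
proof -
  have "\<exists>x\<in>{1..m}. \<forall>i<m - 1. T (i, j) = omit_col x i" if "j < k" for j
    using strict_mono_column_eq_omit_col[of "m - 1" "\<lambda>i. T (i, j)"] T m that
    by (auto simp: ssyt_def cells_lam_shape)
  then obtain X where X: "\<And>j. j < k \<Longrightarrow> X j \<in> {1..m} \<and> (\<forall>i<m - 1. T (i, j) = omit_col (X j) i)"
    by metis
  define xs where "xs = map X [0..<k]"
  define ys where "ys = map (\<lambda>j. T (0, k + j)) [0..<k]"
  have "T (i, j) = lam_tableau m xs ys (i, j)" for i j
  proof (cases "(i, j) \<in> cells m (lam_shape m k)")
    case True
    then show ?thesis
      using X m by (auto simp: cells_lam_shape lam_tableau_def xs_def ys_def)
  next
    case False
    then show ?thesis
      using T m by (auto simp: ssyt_def cells_lam_shape lam_tableau_def xs_def ys_def)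
  qed
  then have "T = lam_tableau m xs ys"
    by auto
  moreover have "set xs \<subseteq> {1..m}"
    using X by (auto simp: xs_def)
  ultimately show thesis
    by (intro that) (simp_all add: xs_def ys_def)
qed

lemma lam_tableau_entries_iff:
  assumes m: "2 \<le> m" and len: "length xs = k" "length ys = k"
  shows "(\<forall>c\<in>cells m (lam_shape m k). lam_tableau m xs ys c \<in> {1..m}) \<longleftrightarrow> set ys \<subseteq> {1..m}"
proof -
  let ?T = "lam_tableau m xs ys"
  have "(\<forall>c\<in>cells m (lam_shape m k). ?T c \<in> {1..m}) \<longleftrightarrow> (\<forall>j<k. ys ! j \<in> {1..m})"
  proof
    assume "\<forall>c\<in>cells m (lam_shape m k). ?T c \<in> {1..m}"
    then have "?T (0, k + j) \<in> {1..m}" if "j < k" for j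
      using m that by (simp add: cells_lam_shape)
    then show "\<forall>j<k. ys ! j \<in> {1..m}"
      using len by (simp add: lam_tableau_def)
  next
    assume "\<forall>j<k. ys ! j \<in> {1..m}"
    then show "\<forall>c\<in>cells m (lam_shape m k). ?T c \<in> {1..m}"
      using m len omit_col_in_range[of _ "m - 1"] by (auto simp: cells_lam_shape lam_tableau_def)
  qed
  then show ?thesis
    using len by (auto simp: set_conv_nth)
qed

lemma lam_tableau_rows_iff:
  assumes m: "2 \<le> m" and len: "length xs = k" "length ys = k"
  shows "(\<forall>i j. (i, Suc j) \<in> cells m (lam_shape m k) \<longrightarrow>
            lam_tableau m xs ys (i, j) \<le> lam_tableau m xs ys (i, Suc j)) \<longleftrightarrow>
         (\<forall>j. Suc j < k \<longrightarrow> (\<forall>i<m - 1. omit_col (xs ! j) i \<le> omit_col (xs ! Suc j) i)) \<and>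
         (\<forall>j. Suc j < k \<longrightarrow> ys ! j \<le> ys ! Suc j) \<and>
         (k \<noteq> 0 \<longrightarrow> omit_col (xs ! (k - 1)) 0 \<le> ys ! 0)"
  (is "?rows \<longleftrightarrow> ?block \<and> ?arm \<and> ?junction")
proof
  assume rows: ?rows
  have "?block"
    using rows m len by (auto simp: cells_lam_shape lam_tableau_def)
  moreover have "?arm"
  proof (intro allI impI)
    fix j assume "Suc j < k"
    then show "ys ! j \<le> ys ! Suc j"
      using rows[rule_format, of 0 "k + j"] m len by (simp add: cells_lam_shape lam_tableau_def)
  qed
  moreover have "?junction"
    using rows[rule_format, of 0 "k - 1"] m len by (auto simp: cells_lam_shape lam_tableau_def)
  ultimately show "?block \<and> ?arm \<and> ?junction" by blast
next
  assume hyps: "?block \<and> ?arm \<and> ?junction"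
  show ?rows
  proof (intro allI impI)
    fix i j
    assume "(i, Suc j) \<in> cells m (lam_shape m k)"
    then consider "i < m - 1" "Suc j < k" | "i = 0" "Suc j = k" | "i = 0" "k \<le> j" "Suc j < 2 * k"
      using m by (fastforce simp: cells_lam_shape)
    then show "lam_tableau m xs ys (i, j) \<le> lam_tableau m xs ys (i, Suc j)"
      by cases (use hyps m len in \<open>auto simp: lam_tableau_def Suc_diff_le\<close>)
  qed
qed

lemma ssyt_lam_tableau_iff:
  assumes m: "2 \<le> m" and len: "length xs = k" "length ys = k" and xs: "set xs \<subseteq> {1..m}"
  shows "ssyt m (lam_shape m k) (lam_tableau m xs ys) \<longleftrightarrow>
    set ys \<subseteq> {1..m} \<and> sorted (rev xs) \<and> sorted ys \<and> (xs \<noteq> [] \<longrightarrow> omit_col (last xs) 0 \<le> hd ys)"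
proof -
  let ?T = "lam_tableau m xs ys"
  have xs_nth: "xs ! j \<in> {1..Suc (m - 1)}" if "j < k" for j
  proof -
    have "xs ! j \<in> {1..m}"
      using nth_mem[of j xs] xs that len by blast
    then show ?thesis
      using m by simp
  qed
  have outside: "\<forall>c. c \<notin> cells m (lam_shape m k) \<longrightarrow> ?T c = 0"
    using m len by (auto simp: cells_lam_shape lam_tableau_def)
  have columns: "\<forall>i j. (Suc i, j) \<in> cells m (lam_shape m k) \<longrightarrow> ?T (i, j) < ?T (Suc i, j)"
    using m len omit_col_strict_mono by (auto simp: cells_lam_shape lam_tableau_def)
  have rows: "(\<forall>i j. (i, Suc j) \<in> cells m (lam_shape m k) \<longrightarrow> ?T (i, j) \<le> ?T (i, Suc j)) \<longleftrightarrow>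
      sorted (rev xs) \<and> sorted ys \<and> (xs \<noteq> [] \<longrightarrow> omit_col (last xs) 0 \<le> hd ys)"
  proof -
    have "(\<forall>j. Suc j < k \<longrightarrow> (\<forall>i<m - 1. omit_col (xs ! j) i \<le> omit_col (xs ! Suc j) i))
        \<longleftrightarrow> sorted (rev xs)"
      using xs_nth omit_col_pointwise_le_iff[of _ "m - 1"] len by (simp add: sorted_rev_iff_nth_Suc)
    moreover have "(\<forall>j. Suc j < k \<longrightarrow> ys ! j \<le> ys ! Suc j) \<longleftrightarrow> sorted ys"
      using len by (simp add: sorted_iff_nth_Suc)
    moreover have "(k \<noteq> 0 \<longrightarrow> omit_col (xs ! (k - 1)) 0 \<le> ys ! 0) \<longleftrightarrow>
        (xs \<noteq> [] \<longrightarrow> omit_col (last xs) 0 \<le> hd ys)"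
      using len by (cases ys) (auto simp: last_conv_nth)
    ultimately show ?thesis
      by (simp only: lam_tableau_rows_iff[OF m len])
  qed
  show ?thesis
    unfolding ssyt_def using lam_tableau_entries_iff[OF m len] outside columns rows by blast
qed

lemma lam_tableau_balanced_iff:
  assumes m: "2 \<le> m" and len: "length xs = k" "length ys = k"
    and xs: "set xs \<subseteq> {1..m}" and ys: "set ys \<subseteq> {1..m}"
  shows "(\<forall>a\<in>{1..m}. \<forall>b\<in>{1..m}. content m (lam_shape m k) (lam_tableau m xs ys) a =
            content m (lam_shape m k) (lam_tableau m xs ys) b) \<longleftrightarrow> mset xs = mset ys"
proof -
  define c where "c a = content m (lam_shape m k) (lam_tableau m xs ys) a" for a
  have c_eq: "c a + count_list xs a = k + count_list ys a" if "a \<in> {1..m}" for a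
    using content_lam_tableau[OF m len xs that] by (simp add: c_def)
  \<comment> \<open>summing \<open>c_eq\<close> over all entries shows that a common content must be \<open>k\<close>\<close>
  have "(\<forall>a\<in>{1..m}. \<forall>b\<in>{1..m}. c a = c b) \<longleftrightarrow> (\<forall>a\<in>{1..m}. c a = k)"
  proof
    assume "\<forall>a\<in>{1..m}. \<forall>b\<in>{1..m}. c a = c b"
    then have equal: "c a = c 1" if "a \<in> {1..m}" for a
      using that m by (meson atLeastAtMost_iff le_refl one_le_numeral order_trans)
    have "(\<Sum>a\<in>{1..m}. c a + count_list xs a) = (\<Sum>a\<in>{1..m}. k + count_list ys a)"
      using c_eq by (intro sum.cong) auto
    then have "(\<Sum>a\<in>{1..m}. c a) = m * k"
      using sum_count_set[OF xs] sum_count_set[OF ys] len by (simp add: sum.distrib)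
    moreover have "(\<Sum>a\<in>{1..m}. c a) = (\<Sum>a\<in>{1..m}. c 1)"
      using equal by (rule sum.cong[OF refl])
    ultimately have "c 1 = k"
      using m by auto
    then show "\<forall>a\<in>{1..m}. c a = k"
      using equal by simp
  qed simp
  also have "\<dots> \<longleftrightarrow> (\<forall>a. count_list xs a = count_list ys a)"
  proof
    assume "\<forall>a\<in>{1..m}. c a = k"
    then have "count_list xs a = count_list ys a" if "a \<in> {1..m}" for a
      using c_eq[OF that] that by simp
    moreover have "count_list xs a = count_list ys a" if "a \<notin> {1..m}" for a
    proof -
      have "a \<notin> set xs" "a \<notin> set ys"
        using xs ys that by auto
      then show ?thesis
        by (metis count_list_0_iff)
    qed
    ultimately show "\<forall>a. count_list xs a = count_list ys a"
      by blast
  next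
    assume "\<forall>a. count_list xs a = count_list ys a"
    then show "\<forall>a\<in>{1..m}. c a = k"
      using c_eq by fastforce
  qed
  also have "\<dots> \<longleftrightarrow> mset xs = mset ys"
    by (simp add: multiset_eq_iff count_mset)
  finally show ?thesis
    by (simp add: c_def)
qed

lemma zero_weight_tableaux_eq_image:
  assumes m: "2 \<le> m"
  shows "{T. ssyt m (lam_shape m k) T \<and>
      (\<forall>a\<in>{1..m}. \<forall>b\<in>{1..m}. content m (lam_shape m k) T a = content m (lam_shape m k) T b)} =
    (\<lambda>L. lam_tableau m (rev L) L) ` {L. length L = k \<and> sorted L \<and> set L \<subseteq> {2..m}}"
    (is "{T. ssyt m (lam_shape m k) T \<and> ?balanced T} = ?tab ` ?Ls")
proof (intro equalityI subsetI)
  fix T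
  assume "T \<in> {T. ssyt m (lam_shape m k) T \<and> ?balanced T}"
  then have T: "ssyt m (lam_shape m k) T" and balanced: "?balanced T"
    by blast+
  obtain xs ys where len: "length xs = k" "length ys = k" and xs: "set xs \<subseteq> {1..m}"
    and T_eq: "T = lam_tableau m xs ys"
    using ssyt_lam_shape_obtains_lam_tableau[OF m T] .
  have ys: "set ys \<subseteq> {1..m}" and sorted: "sorted (rev xs)" "sorted ys"
    and junction: "xs \<noteq> [] \<longrightarrow> omit_col (last xs) 0 \<le> hd ys"
    using T unfolding T_eq ssyt_lam_tableau_iff[OF m len xs] by blast+
  have "mset xs = mset ys"
    using balanced unfolding T_eq lam_tableau_balanced_iff[OF m len xs ys] .
  then have ys_eq: "ys = rev xs"
    using properties_for_sort[of ys "rev xs"] sorted by (simp add: sorted_sort_id)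
  have "set ys \<subseteq> {2..m}"
  proof (cases ys)
    case (Cons y ys')
    then have "2 \<le> y"
      using junction ys_eq by (auto simp: omit_col_zero_le_iff simp flip: hd_rev)
    then show ?thesis
      using ys sorted Cons by fastforce
  qed simp
  then show "T \<in> ?tab ` ?Ls"
    using T_eq ys_eq len sorted by (intro image_eqI[of _ _ ys]) auto
next
  fix T
  assume "T \<in> ?tab ` ?Ls"
  then obtain L where L: "length L = k" "sorted L" "set L \<subseteq> {2..m}" and T_eq: "T = ?tab L"
    by blast
  have len_rev: "length (rev L) = k" and range: "set (rev L) \<subseteq> {1..m}" "set L \<subseteq> {1..m}"
    using L by auto
  have "L \<noteq> [] \<Longrightarrow> 2 \<le> hd L"
    using L by (cases L) auto
  then have "ssyt m (lam_shape m k) T"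
    unfolding T_eq ssyt_lam_tableau_iff[OF m len_rev L(1) range(1)]
    using L range by (simp add: last_rev omit_col_zero_le_iff)
  moreover have "?balanced T"
    unfolding T_eq lam_tableau_balanced_iff[OF m len_rev L(1) range] by simp
  ultimately show "T \<in> {T. ssyt m (lam_shape m k) T \<and> ?balanced T}"
    by blast
qed

lemma inj_on_lam_tableau_rev: "inj_on (\<lambda>L. lam_tableau m (rev L) L) {L. length L = k}"
proof (rule inj_onI)
  fix L L'
  assume "L \<in> {L. length L = k}" "L' \<in> {L. length L = k}"
    and eq: "lam_tableau m (rev L) L = lam_tableau m (rev L') L'"
  then have "length L = k" "length L' = k"
    by auto
  moreover have "L ! j = L' ! j" if "j < k" for j
    using fun_cong[OF eq, of "(0, k + j)"] that \<open>length L = k\<close> \<open>length L' = k\<close>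
    by (simp add: lam_tableau_def)
  ultimately show "L = L'"
    by (simp add: nth_equalityI)
qed

lemma card_sorted_lists:
  fixes A :: "'a::linorder set"
  assumes "finite A"
  shows "card {xs. length xs = n \<and> sorted xs \<and> set xs \<subseteq> A} = (card A + n - 1) choose n"
proof -
  have "bij_betw mset {xs. length xs = n \<and> sorted xs \<and> set xs \<subseteq> A} (multisets_of_size A n)"
    by (rule bij_betw_byWitness[where f' = sorted_list_of_multiset])
      (auto simp: multisets_of_size_def sorted_sort_id simp flip: size_mset)
  then show ?thesis
    using card_multisets_of_size[OF assms] by (simp add: bij_betw_same_card)
qed

theorem lemmaT3:
  fixes m k :: nat
  assumes "m \<ge> 2"
  shows "zero_weight_mult m k = (k + m - 2) choose k"
proof -
  have "zero_weight_mult m k =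
      card ((\<lambda>L. lam_tableau m (rev L) L) ` {L. length L = k \<and> sorted L \<and> set L \<subseteq> {2..m}})"
    unfolding zero_weight_mult_def zero_weight_tableaux_eq_image[OF assms] ..
  also have "\<dots> = card {L. length L = k \<and> sorted L \<and> set L \<subseteq> {2..m::nat}}"
    by (intro card_image inj_on_subset[OF inj_on_lam_tableau_rev[of m k]]) auto
  also have "\<dots> = (k + m - 2) choose k"
    using assms by (simp add: card_sorted_lists add.commute numeral_2_eq_2)
  finally show ?thesis .
qed

end
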